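(* Let $n\ge3$. For an SSM-recurrent configuration $c$ on $W_n$ define $m(c)\in\{0,1,2\}^n$ by $m(c)_i=0$ if $c_i=0$, $m(c)_i=2$ if $i$ is a cyclically first maximal vertex of $c$, and $m(c)_i=1$ otherwise. Then $m$ is a surjection from the set of SSM-recurrent configurations on $W_n$ onto the set of minimal SSM-recurrent configurations on $W_n$, $m(c)=c$ whenever $c$ is minimal SSM-recurrent, and $\mathrm{level}(c)=|c|-|m(c)|$, where $|c|=\sum_{i=1}^n c_i$.
   Context: $W_n$: cycle $C_n$ on $[n]$ (edges $\{i,i+1\}$, $\{n,1\}$, indices mod $n$, vertices clockwise) plus sink $0$ adjacent to all of $[n]$. For $i,j\in[n]$, $(i,j)$ is the set of vertices strictly between $i$ and $j$ going clockwise from $i$ to $j$ ($(i,i)=[n]\setminus\{i\}$). Sandpile setting: stable configurations on $W_n$ are $c\in\{0,1,2\}^n$; SSM (parameter $p\in(0,1)$: a toppling vertex sends a grain independently to each neighbour with probability $p$, grains to the sink vanish) Markov chain adds a grain at a random vertex and stabilises; SSM-recurrent = recurrent state. Known: stable $c$ is SSM-recurrent iff for all $i,j$ with $c_i=c_j=0$ some $k\in(i,j)$ has $c_k=2$. Minimal SSM-recurrent: SSM-recurrent with no other SSM-recurrent $c'$ satisfying $c'_i\le c_i$ for all $i$. A vertex $i$ is a cyclically first maximal vertex of $c$ if $c_i=2$ and there is $j\in[n]$ with $c_j=0$ and $c_k=1$ for all $k\in(j,i)$. The level of a recurrent configuration on $W_n$ is $\mathrm{level}(c)=\sum_i c_i+\deg(0)-|E(W_n)|=\sum_i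 c_i-n$. *)

theory Defs
  imports Main
begin

text \<open>Vertices of the cycle are 1..n (the sink 0 is not part of a configuration).
  A configuration is a function nat => nat, required to vanish outside {1..n}
  so that configurations are canonical objects.\<close>

type_synonym config = "nat \<Rightarrow> nat"

text \<open>Clockwise open cyclic interval (i,j): vertices strictly between i and j going
  clockwise from i; (i,i) is everything except i.\<close>
definition cyc_open :: "nat \<Rightarrow> nat \<Rightarrow> nat \<Rightarrow> nat set" where
  "cyc_open n i j = {k \<in> {1..n}.
      0 < (int k - int i) mod int n \<and>
      ((int k - int i) mod int n < (int j - int i) mod int n \<or> (int j - int i) mod int n = 0)}"

definition stable :: "nat \<Rightarrow> config \<Rightarrow> bool" where
  "stable n c \<longleftrightarrow> (\<forall>i\<in>{1..n}. c i \<le> 2) \<and> (\<forall>i. i \<notin> {1..n} \<longrightarrow> c i = 0)"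

text \<open>SSM-recurrence on W_n, via the (known) characterisation stated in the context.\<close>
definition SSM_recurrent :: "nat \<Rightarrow> config \<Rightarrow> bool" where
  "SSM_recurrent n c \<longleftrightarrow> stable n c \<and>
     (\<forall>i\<in>{1..n}. \<forall>j\<in>{1..n}. c i = 0 \<and> c j = 0 \<longrightarrow> (\<exists>k\<in>cyc_open n i j. c k = 2))"

definition minimal_SSM_recurrent :: "nat \<Rightarrow> config \<Rightarrow> bool" where
  "minimal_SSM_recurrent n c \<longleftrightarrow> SSM_recurrent n c \<and>
     \<not> (\<exists>c'. SSM_recurrent n c' \<and> c' \<noteq> c \<and> (\<forall>i\<in>{1..n}. c' i \<le> c i))"

definition cyc_first_max :: "nat \<Rightarrow> config \<Rightarrow> nat \<Rightarrow> bool" where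
  "cyc_first_max n c i \<longleftrightarrow> c i = 2 \<and>
     (\<exists>j\<in>{1..n}. c j = 0 \<and> (\<forall>k\<in>cyc_open n j i. c k = 1))"

definition mmap :: "nat \<Rightarrow> config \<Rightarrow> config" where
  "mmap n c = (\<lambda>i. if i \<notin> {1..n} \<or> c i = 0 then 0
                    else if cyc_first_max n c i then 2 else 1)"

definition csize :: "nat \<Rightarrow> config \<Rightarrow> nat" where
  "csize n c = (\<Sum>i\<in>{1..n}. c i)"

text \<open>level(c) = sum c_i + deg(0) - |E(W_n)| = sum c_i + n - 2n.\<close>
definition level :: "nat \<Rightarrow> config \<Rightarrow> int" where
  "level n c = int (csize n c) + int n - int (2 * n)"

end

theory Submission imports Defs begin

text \<open>Every zero j of a recurrent c is followed clockwise, through a run of 1s, by a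
  vertex of height 2, and j \<mapsto> that vertex is a bijection from the zeros onto the
  cyclically first maximal vertices. Hence m(c) has as many 2s as 0s, so |m(c)| = n.
  Since m(c) \<le> c is again recurrent and every recurrent configuration has size at least
  |m(c)| = n, m(c) is minimal, a minimal c satisfies m(c) = c, and
  level(c) = |c| - n = |c| - |m(c)|.\<close>

definition cyc_offset :: "nat \<Rightarrow> nat \<Rightarrow> nat \<Rightarrow> nat" where
  "cyc_offset n a b = nat ((int b - int a) mod int n)"

lemma int_cyc_offset: "n > 0 \<Longrightarrow> int (cyc_offset n a b) = (int b - int a) mod int n"
  unfolding cyc_offset_def by simp

lemma cyc_offset_less: "n > 0 \<Longrightarrow> cyc_offset n a b < n"
  using int_cyc_offset[of n a b] by (metis of_nat_less_iff pos_mod_bound of_nat_0_less_iff)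

lemma cyc_offset_self [simp]: "cyc_offset n a a = 0"
  by (simp add: cyc_offset_def)

lemma cyc_offset_eq_0_iff:
  assumes "n > 0" "a \<in> {1..n}" "b \<in> {1..n}"
  shows "cyc_offset n a b = 0 \<longleftrightarrow> a = b"
proof
  assume "cyc_offset n a b = 0"
  then have "int n dvd (int b - int a)"
    using int_cyc_offset[OF assms(1), of a b] by auto
  moreover have "\<bar>int b - int a\<bar> < int n" using assms by auto
  ultimately have "int b - int a = 0" using dvd_imp_le_int[of "int b - int a" "int n"] by linarith
  then show "a = b" by simp
qed simp

lemma cyc_offset_add_mod:
  assumes "n > 0"
  shows "cyc_offset n a c = (cyc_offset n a b + cyc_offset n b c) mod n"
proof -
  have "int (cyc_offset n a c) = ((int b - int a) + (int c - int b)) mod int n"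
    using int_cyc_offset[OF assms] by simp
  also have "\<dots> = ((int b - int a) mod int n + (int c - int b) mod int n) mod int n"
    by (simp add: mod_add_eq)
  also have "\<dots> = int ((cyc_offset n a b + cyc_offset n b c) mod n)"
    using int_cyc_offset[OF assms] by (simp add: zmod_int)
  finally show ?thesis by simp
qed

lemma cyc_offset_add:
  assumes "n > 0" "cyc_offset n a b + cyc_offset n b c < n"
  shows "cyc_offset n a c = cyc_offset n a b + cyc_offset n b c"
  using cyc_offset_add_mod[OF assms(1), of a c b] mod_less[OF assms(2)] by (rule trans)

lemma cyc_offset_diff:
  assumes "n > 0" "cyc_offset n a b \<le> cyc_offset n a c"
  shows "cyc_offset n b c = cyc_offset n a c - cyc_offset n a b"
proof (cases "cyc_offset n a b + cyc_offset n b c < n")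
  case True
  then show ?thesis using cyc_offset_add[OF assms(1) True] by simp
next
  case False
  let ?s = "cyc_offset n a b + cyc_offset n b c"
  have "?s - n < n"
    using cyc_offset_less[OF assms(1), of a b] cyc_offset_less[OF assms(1), of b c] by linarith
  have "?s mod n = (?s - n) mod n" using False by (intro le_mod_geq) simp
  also have "\<dots> = ?s - n" using \<open>?s - n < n\<close> by (rule mod_less)
  finally show ?thesis
    using cyc_offset_add_mod[OF assms(1), of a c b] cyc_offset_less[OF assms(1), of b c] assms(2) False
    by linarith
qed

lemma cyc_offset_add_swap:
  assumes "n > 0" "a \<in> {1..n}" "b \<in> {1..n}" "a \<noteq> b"
  shows "cyc_offset n a b + cyc_offset n b a = n"
proof -
  let ?s = "cyc_offset n a b + cyc_offset n b a"
  have "?s mod n = 0" using cyc_offset_add_mod[OF assms(1), of a a b] by simp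
  moreover have "cyc_offset n a b > 0"
    using cyc_offset_eq_0_iff[OF assms(1-3)] assms(4) by simp
  ultimately have "n \<le> ?s" by (cases "?s < n") auto
  moreover have "?s < 2 * n"
    using cyc_offset_less[OF assms(1), of a b] cyc_offset_less[OF assms(1), of b a] by linarith
  ultimately show ?thesis using \<open>?s mod n = 0\<close> by (simp add: le_mod_geq)
qed

lemma mem_cyc_open_iff:
  assumes "n > 0"
  shows "k \<in> cyc_open n i j \<longleftrightarrow> k \<in> {1..n} \<and> 0 < cyc_offset n i k \<and>
           (cyc_offset n i k < cyc_offset n i j \<or> cyc_offset n i j = 0)"
proof -
  have "\<And>a b. (int b - int a) mod int n = int (cyc_offset n a b)"
    using int_cyc_offset[OF assms] by simp
  then show ?thesis unfolding cyc_open_def by simp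
qed

lemma mem_cyc_open_if_offset_less:
  assumes "n > 0" "k \<in> {1..n}" "0 < cyc_offset n i k" "cyc_offset n i k < cyc_offset n i j"
  shows "k \<in> cyc_open n i j"
  using assms mem_cyc_open_iff by blast

lemma cyc_open_total_right:
  assumes n: "n > 0" and in_n: "a \<in> {1..n}" "x \<in> {1..n}" "y \<in> {1..n}"
    and ne: "x \<noteq> a" "y \<noteq> a" "x \<noteq> y"
  shows "x \<in> cyc_open n a y \<or> y \<in> cyc_open n a x"
proof -
  have pos: "0 < cyc_offset n a x" "0 < cyc_offset n a y"
    using cyc_offset_eq_0_iff[OF n in_n(1,2)] cyc_offset_eq_0_iff[OF n in_n(1,3)] ne by auto
  have "cyc_offset n a x \<noteq> cyc_offset n a y"
  proof
    assume "cyc_offset n a x = cyc_offset n a y"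
    then have "cyc_offset n x y = 0" using cyc_offset_diff[OF n, of a x y] by simp
    then show False using cyc_offset_eq_0_iff[OF n in_n(2,3)] ne(3) by simp
  qed
  then show ?thesis using mem_cyc_open_if_offset_less[OF n] in_n pos by (metis linorder_neqE_nat)
qed

lemma cyc_open_total_left:
  assumes n: "n > 0" and in_n: "a \<in> {1..n}" "b \<in> {1..n}" "c \<in> {1..n}"
    and ne: "a \<noteq> b" "a \<noteq> c" "b \<noteq> c"
  shows "b \<in> cyc_open n a c \<or> a \<in> cyc_open n b c"
proof (cases "cyc_offset n a b < cyc_offset n a c")
  case True
  moreover have "0 < cyc_offset n a b" using cyc_offset_eq_0_iff[OF n in_n(1,2)] ne(1) by simp
  ultimately show ?thesis using mem_cyc_open_if_offset_less[OF n in_n(2)] by blast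
next
  case False
  have swap: "cyc_offset n a b + cyc_offset n b a = n"
    using cyc_offset_add_swap[OF n in_n(1,2) ne(1)] .
  have "cyc_offset n a b \<noteq> cyc_offset n a c"
  proof
    assume "cyc_offset n a b = cyc_offset n a c"
    then have "cyc_offset n b c = 0" using cyc_offset_diff[OF n, of a b c] by simp
    then show False using cyc_offset_eq_0_iff[OF n in_n(2,3)] ne(3) by simp
  qed
  with False have "cyc_offset n b a + cyc_offset n a c < n" using swap by linarith
  then have "cyc_offset n b c = cyc_offset n b a + cyc_offset n a c" by (rule cyc_offset_add[OF n])
  moreover have "0 < cyc_offset n b a" "0 < cyc_offset n a c"
    using cyc_offset_eq_0_iff[OF n in_n(2,1)] cyc_offset_eq_0_iff[OF n in_n(1,3)] ne by auto
  ultimately show ?thesis using mem_cyc_open_if_offset_less[OF n] in_n by auto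
qed

lemma SSM_recurrent_stable: "SSM_recurrent n c \<Longrightarrow> stable n c"
  unfolding SSM_recurrent_def by simp

definition first_max_after :: "nat \<Rightarrow> config \<Rightarrow> nat \<Rightarrow> nat \<Rightarrow> bool" where
  "first_max_after n c j i \<longleftrightarrow> j \<in> {1..n} \<and> i \<in> {1..n} \<and> c j = 0 \<and> c i = 2 \<and>
     (\<forall>a\<in>cyc_open n j i. c a = 1)"

lemma cyc_first_max_iff_first_max_after:
  assumes "stable n c"
  shows "cyc_first_max n c i \<longleftrightarrow> (\<exists>j. first_max_after n c j i)"
proof -
  have "c i = 2 \<Longrightarrow> i \<in> {1..n}" using assms unfolding stable_def by fastforce
  then show ?thesis unfolding cyc_first_max_def first_max_after_def by blast
qed

text \<open>Between a zero j and the nearest 2 clockwise after it there is no 2 by choice, and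
  no 0, since a 0 there would need a 2 strictly between j and itself.\<close>
lemma nearest_max_after_zero:
  assumes n: "n > 0" and r: "SSM_recurrent n c" and j: "j \<in> {1..n}" "c j = 0"
  obtains i where "first_max_after n c j i"
    and "\<And>k. k \<in> {1..n} \<Longrightarrow> c k = 2 \<Longrightarrow> cyc_offset n j i \<le> cyc_offset n j k"
proof -
  have st: "stable n c" using SSM_recurrent_stable[OF r] .
  obtain k0 where "k0 \<in> cyc_open n j j" "c k0 = 2"
    using r j unfolding SSM_recurrent_def by blast
  then have "k0 \<in> {1..n} \<and> c k0 = 2" using mem_cyc_open_iff[OF n] by blast
  then obtain i where i: "i \<in> {1..n}" "c i = 2"
    and nearest: "\<And>k. k \<in> {1..n} \<and> c k = 2 \<Longrightarrow> cyc_offset n j i \<le> cyc_offset n j k"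
    using ex_has_least_nat[of "\<lambda>k. k \<in> {1..n} \<and> c k = 2" k0 "cyc_offset n j"] by blast
  have "c a = 1" if a: "a \<in> cyc_open n j i" for a
  proof -
    have "cyc_offset n j i \<noteq> 0" using cyc_offset_eq_0_iff[OF n j(1) i(1)] i j by auto
    then have a': "a \<in> {1..n}" "0 < cyc_offset n j a" "cyc_offset n j a < cyc_offset n j i"
      using a mem_cyc_open_iff[OF n] by auto
    have "c a \<noteq> 0"
    proof
      assume "c a = 0"
      then obtain k where "k \<in> cyc_open n j a" "c k = 2"
        using r j a'(1) unfolding SSM_recurrent_def by blast
      then show False using nearest[of k] a' mem_cyc_open_iff[OF n] by auto
    qed
    moreover have "c a \<noteq> 2" using nearest[of a] a' by auto
    moreover have "c a \<le> 2" using st a'(1) unfolding stable_def by auto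
    ultimately show "c a = 1" by linarith
  qed
  then show thesis using that i j nearest unfolding first_max_after_def by blast
qed

lemma first_max_after_unique_right:
  assumes "n > 0" "first_max_after n c j i1" "first_max_after n c j i2"
  shows "i1 = i2"
  using assms cyc_open_total_right[of n j i1 i2] unfolding first_max_after_def by fastforce

lemma first_max_after_unique_left:
  assumes "n > 0" "first_max_after n c j1 i" "first_max_after n c j2 i"
  shows "j1 = j2"
  using assms cyc_open_total_left[of n j1 j2 i] unfolding first_max_after_def by fastforce

lemma card_zeros_eq_card_cyc_first_max:
  assumes n: "n > 0" and r: "SSM_recurrent n c"
  shows "card {j\<in>{1..n}. c j = 0} = card {i\<in>{1..n}. cyc_first_max n c i}"
proof -
  have st: "stable n c" using SSM_recurrent_stable[OF r] .
  define P where "P = {(j, i). first_max_after n c j i}"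
  have "fst ` P = {j\<in>{1..n}. c j = 0}"
  proof
    show "{j\<in>{1..n}. c j = 0} \<subseteq> fst ` P"
    proof
      fix j assume "j \<in> {j\<in>{1..n}. c j = 0}"
      then obtain i where "first_max_after n c j i" using nearest_max_after_zero[OF n r] by blast
      then show "j \<in> fst ` P" unfolding P_def by force
    qed
  qed (auto simp: P_def first_max_after_def)
  moreover have "snd ` P = {i\<in>{1..n}. cyc_first_max n c i}"
    using cyc_first_max_iff_first_max_after[OF st]
    by (auto simp: P_def image_iff first_max_after_def)
  moreover have "inj_on fst P" "inj_on snd P"
    using first_max_after_unique_right[OF n] first_max_after_unique_left[OF n]
    unfolding inj_on_def P_def by auto
  ultimately show ?thesis by (metis card_image)
qed

lemma mmap_le: "stable n c \<Longrightarrow> mmap n c i \<le> c i"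
  unfolding mmap_def cyc_first_max_def stable_def by auto

lemma stable_mmap: "stable n (mmap n c)"
  unfolding mmap_def stable_def by auto

lemma SSM_recurrent_mmap:
  assumes n: "n > 0" and r: "SSM_recurrent n c"
  shows "SSM_recurrent n (mmap n c)"
proof -
  have st: "stable n c" using SSM_recurrent_stable[OF r] .
  have "\<exists>k\<in>cyc_open n j j'. mmap n c k = 2"
    if j: "j \<in> {1..n}" "j' \<in> {1..n}" and z: "mmap n c j = 0" "mmap n c j' = 0" for j j'
  proof -
    have cz: "c j = 0" "c j' = 0" using z j unfolding mmap_def by (auto split: if_splits)
    obtain k where k: "k \<in> cyc_open n j j'" "c k = 2"
      using r j cz unfolding SSM_recurrent_def by blast
    obtain i where i: "first_max_after n c j i"
      and nearest: "\<And>k. k \<in> {1..n} \<Longrightarrow> c k = 2 \<Longrightarrow> cyc_offset n j i \<le> cyc_offset n j k"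
      using nearest_max_after_zero[OF n r j(1) cz(1)] by blast
    have "i \<in> {1..n}" "c i = 2" using i unfolding first_max_after_def by auto
    then have "mmap n c i = 2"
      using i cyc_first_max_iff_first_max_after[OF st] unfolding mmap_def by auto
    moreover have "i \<in> cyc_open n j j'"
    proof -
      have "k \<in> {1..n}" "cyc_offset n j k < cyc_offset n j j' \<or> cyc_offset n j j' = 0"
        using k(1)[unfolded mem_cyc_open_iff[OF n]] by simp_all
      moreover have "cyc_offset n j i \<le> cyc_offset n j k"
        using nearest k(2) \<open>k \<in> {1..n}\<close> by blast
      moreover have "0 < cyc_offset n j i"
        using cyc_offset_eq_0_iff[OF n j(1) \<open>i \<in> {1..n}\<close>] \<open>c i = 2\<close> cz(1) by auto
      ultimately show ?thesis unfolding mem_cyc_open_iff[OF n] using \<open>i \<in> {1..n}\<close> by auto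
    qed
    ultimately show ?thesis by blast
  qed
  then show ?thesis using stable_mmap unfolding SSM_recurrent_def by blast
qed

lemma csize_mmap:
  assumes n: "n > 0" and r: "SSM_recurrent n c"
  shows "csize n (mmap n c) = n"
proof -
  define Z where "Z = {j\<in>{1..n}. c j = 0}"
  define F where "F = {i\<in>{1..n}. cyc_first_max n c i}"
  have mmap_value: "int (mmap n c i) = 1 + of_bool (i \<in> F) - of_bool (i \<in> Z)"
    if "i \<in> {1..n}" for i
    using that unfolding mmap_def F_def Z_def cyc_first_max_def by auto
  have "int (csize n (mmap n c)) = (\<Sum>i\<in>{1..n}. int (mmap n c i))"
    unfolding csize_def by simp
  also have "\<dots> = (\<Sum>i\<in>{1..n}. 1 + of_bool (i \<in> F) - of_bool (i \<in> Z))"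
    using mmap_value by (rule sum.cong[OF refl])
  also have "\<dots> = int n + int (card ({1..n} \<inter> F)) - int (card ({1..n} \<inter> Z))"
    by (simp add: sum.distrib sum_subtractf)
  also have "\<dots> = int n"
  proof -
    have "{1..n} \<inter> F = F" "{1..n} \<inter> Z = Z" unfolding F_def Z_def by auto
    moreover have "card Z = card F"
      unfolding F_def Z_def by (rule card_zeros_eq_card_cyc_first_max[OF n r])
    ultimately show ?thesis by simp
  qed
  finally show ?thesis by simp
qed

lemma csize_ge_of_SSM_recurrent:
  assumes "n > 0" "SSM_recurrent n c"
  shows "n \<le> csize n c"
proof -
  have "csize n (mmap n c) \<le> csize n c"
    unfolding csize_def using mmap_le[OF SSM_recurrent_stable[OF assms(2)]] by (rule sum_mono)
  then show ?thesis using csize_mmap[OF assms] by simp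
qed

lemma minimal_SSM_recurrent_mmap:
  assumes n: "n > 0" and r: "SSM_recurrent n c"
  shows "minimal_SSM_recurrent n (mmap n c)"
proof -
  have "c' = mmap n c"
    if r': "SSM_recurrent n c'" and le: "\<forall>i\<in>{1..n}. c' i \<le> mmap n c i" for c'
  proof (rule ccontr)
    assume "c' \<noteq> mmap n c"
    then obtain i where i: "c' i \<noteq> mmap n c i" by blast
    then have "i \<in> {1..n}"
      using SSM_recurrent_stable[OF r'] stable_mmap unfolding stable_def by metis
    then have "csize n c' < csize n (mmap n c)"
      unfolding csize_def using le i
      by (intro sum_strict_mono_ex1) (auto simp: order.strict_iff_order)
    then show False using csize_ge_of_SSM_recurrent[OF n r'] csize_mmap[OF n r] by simp
  qed
  then show ?thesis using SSM_recurrent_mmap[OF n r] unfolding minimal_SSM_recurrent_def by blast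
qed

lemma mmap_minimal:
  assumes "n > 0" "minimal_SSM_recurrent n c"
  shows "mmap n c = c"
proof -
  have r: "SSM_recurrent n c" using assms(2) unfolding minimal_SSM_recurrent_def by simp
  show ?thesis
    using assms(2) SSM_recurrent_mmap[OF assms(1) r] mmap_le[OF SSM_recurrent_stable[OF r]]
    unfolding minimal_SSM_recurrent_def by blast
qed

theorem mainTheorem5:
  fixes n :: nat
  assumes "n \<ge> 3"
  shows "mmap n ` {c. SSM_recurrent n c} = {c. minimal_SSM_recurrent n c}
    \<and> (\<forall>c. minimal_SSM_recurrent n c \<longrightarrow> mmap n c = c)
    \<and> (\<forall>c. SSM_recurrent n c \<longrightarrow> level n c = int (csize n c) - int (csize n (mmap n c)))"
proof -
  have n: "n > 0" using assms by simp
  have "mmap n ` {c. SSM_recurrent n c} \<subseteq> {c. minimal_SSM_recurrent n c}"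
    using minimal_SSM_recurrent_mmap[OF n] by auto
  moreover have "c \<in> mmap n ` {c. SSM_recurrent n c}" if m: "minimal_SSM_recurrent n c" for c
    using image_eqI[where f = "mmap n", OF mmap_minimal[OF n m, symmetric]] m
    unfolding minimal_SSM_recurrent_def by blast
  moreover have "level n c = int (csize n c) - int (csize n (mmap n c))" if "SSM_recurrent n c" for c
    using csize_mmap[OF n that] unfolding level_def by simp
  ultimately show ?thesis using mmap_minimal[OF n] by blast
qed

end
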